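(* Let $V$ be a finite-dimensional real vector space, let $T_1,\dots,T_n\in V^*$ be linearly independent, and let $Q$ be a quadratic form on $V$ which is not identically zero on $\bigcap_{i=1}^n\ker(T_i)$. If $F\in\mathbb{R}[z_0,\dots,z_n]$ is a polynomial such that the function $V\to\mathbb{R}$, $v\mapsto F(Q(v),T_1(v),\dots,T_n(v))$, is identically zero, then $F$ is the zero polynomial. *)

theory Defs
  imports "HOL-Analysis.Analysis"
begin

text \<open>A real polynomial in variables z_0, z_1, ... is represented by its coefficient
  function c on exponent vectors (monomials) alpha :: nat \<Rightarrow> nat; the monomial
  alpha stands for prod_i z_i ^ (alpha i).\<close>

definition is_poly_in_vars :: "nat \<Rightarrow> ((nat \<Rightarrow> nat) \<Rightarrow> real) \<Rightarrow> bool" where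
  "is_poly_in_vars n c \<longleftrightarrow>
     finite {\<alpha>. c \<alpha> \<noteq> 0} \<and> (\<forall>\<alpha>. c \<alpha> \<noteq> 0 \<longrightarrow> (\<forall>i>n. \<alpha> i = 0))"

definition poly_eval :: "((nat \<Rightarrow> nat) \<Rightarrow> real) \<Rightarrow> (nat \<Rightarrow> real) \<Rightarrow> real" where
  "poly_eval c z = (\<Sum>\<alpha>\<in>{\<alpha>. c \<alpha> \<noteq> 0}. c \<alpha> * (\<Prod>i\<in>{i. \<alpha> i \<noteq> 0}. z i ^ \<alpha> i))"

definition quadratic_form :: "('v::real_vector \<Rightarrow> real) \<Rightarrow> bool" where
  "quadratic_form Q \<longleftrightarrow> (\<exists>B. bilinear B \<and> (\<forall>v. Q v = B v v))"

end

theory Submission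
  imports Defs
begin

text \<open>Choose v with T_i v = 0 for all i and Q v \<noteq> 0, and, for prescribed values z_1, ..., z_n,
  a vector u with T_i u = z_i (the T_i are independent). Along the line s v + u the T_i stay
  equal to z_i while Q is a nonconstant quadratic in s, so it takes infinitely many values x.
  Hence x \<mapsto> F(x, z_1, ..., z_n) has infinitely many roots and vanishes identically, i.e. F
  vanishes on all of R^(n+1); induction on the number of variables shows that such a polynomial
  has only zero coefficients.\<close>

definition monomial_eval :: "(nat \<Rightarrow> nat) \<Rightarrow> (nat \<Rightarrow> real) \<Rightarrow> real" where
  "monomial_eval \<alpha> z = (\<Prod>i | \<alpha> i \<noteq> 0. z i ^ \<alpha> i)"

text \<open>Viewing c as a polynomial in z_m over the other variables, coeff_var c m k is the
  coefficient of z_m^k; its monomials do not involve z_m.\<close>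

definition coeff_var :: "((nat \<Rightarrow> nat) \<Rightarrow> real) \<Rightarrow> nat \<Rightarrow> nat \<Rightarrow> (nat \<Rightarrow> nat) \<Rightarrow> real" where
  "coeff_var c m k = (\<lambda>\<alpha>. if \<alpha> m = 0 then c (\<alpha>(m := k)) else 0)"

lemma poly_eval_altdef: "poly_eval c z = (\<Sum>\<alpha> | c \<alpha> \<noteq> 0. c \<alpha> * monomial_eval \<alpha> z)"
  by (simp add: poly_eval_def monomial_eval_def)

lemma poly_eval_cong:
  assumes "\<And>\<alpha> i. c \<alpha> \<noteq> 0 \<Longrightarrow> \<alpha> i \<noteq> 0 \<Longrightarrow> z i = z' i"
  shows "poly_eval c z = poly_eval c z'"
  unfolding poly_eval_def using assms by (intro sum.cong refl arg_cong2[where f = "(*)"] prod.cong) auto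

lemma monomial_eval_split_var:
  assumes "finite {i. \<alpha> i \<noteq> 0}"
  shows "monomial_eval \<alpha> z = z m ^ \<alpha> m * monomial_eval (\<alpha>(m := 0)) z"
proof (cases "\<alpha> m = 0")
  case True
  then show ?thesis by (simp add: fun_upd_idem)
next
  case False
  then have "{i. \<alpha> i \<noteq> 0} = insert m {i. (\<alpha>(m := 0)) i \<noteq> 0}" by auto
  moreover have "finite {i. (\<alpha>(m := 0)) i \<noteq> 0}"
    using assms by (rule rev_finite_subset) auto
  ultimately show ?thesis
    unfolding monomial_eval_def by (auto intro!: prod.cong)
qed

lemma coeff_var_fun_upd_self [simp]: "coeff_var c m (\<alpha> m) (\<alpha>(m := 0)) = c \<alpha>"
  by (simp add: coeff_var_def)

lemma support_coeff_var:
  "{\<beta>. coeff_var c m k \<beta> \<noteq> 0} = (\<lambda>\<alpha>. \<alpha>(m := 0)) ` {\<alpha>. c \<alpha> \<noteq> 0 \<and> \<alpha> m = k}"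
proof (intro set_eqI iffI)
  fix \<beta> assume "\<beta> \<in> {\<beta>. coeff_var c m k \<beta> \<noteq> 0}"
  then have "\<beta> m = 0" "c (\<beta>(m := k)) \<noteq> 0" by (auto simp: coeff_var_def split: if_splits)
  then show "\<beta> \<in> (\<lambda>\<alpha>. \<alpha>(m := 0)) ` {\<alpha>. c \<alpha> \<noteq> 0 \<and> \<alpha> m = k}"
    by (intro image_eqI[of _ _ "\<beta>(m := k)"]) auto
qed auto

lemma poly_eval_coeff_var_fun_upd [simp]:
  "poly_eval (coeff_var c m k) (z(m := x)) = poly_eval (coeff_var c m k) z"
  by (rule poly_eval_cong) (auto simp: coeff_var_def split: if_splits)

lemma poly_eval_coeff_var_mult:
  assumes fin: "finite {\<alpha>. c \<alpha> \<noteq> 0}"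
    and fin_vars: "\<And>\<alpha>. c \<alpha> \<noteq> 0 \<Longrightarrow> finite {i. \<alpha> i \<noteq> 0}"
  shows "poly_eval (coeff_var c m k) z * z m ^ k
    = (\<Sum>\<alpha> | c \<alpha> \<noteq> 0 \<and> \<alpha> m = k. c \<alpha> * monomial_eval \<alpha> z)"
proof -
  let ?A = "{\<alpha>. c \<alpha> \<noteq> 0 \<and> \<alpha> m = k}"
  have inj: "inj_on (\<lambda>\<alpha>. \<alpha>(m := 0)) ?A"
    by (rule inj_onI) (metis (mono_tags, lifting) fun_upd_triv fun_upd_upd mem_Collect_eq)
  have "poly_eval (coeff_var c m k) z
      = (\<Sum>\<alpha>\<in>?A. coeff_var c m k (\<alpha>(m := 0)) * monomial_eval (\<alpha>(m := 0)) z)"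
    unfolding poly_eval_altdef support_coeff_var by (rule sum.reindex[OF inj, unfolded comp_def])
  also have "\<dots> = (\<Sum>\<alpha>\<in>?A. c \<alpha> * monomial_eval (\<alpha>(m := 0)) z)"
    by (intro sum.cong refl) (metis (mono_tags) coeff_var_fun_upd_self mem_Collect_eq)
  finally show ?thesis
    using fin_vars by (auto simp: sum_distrib_right monomial_eval_split_var[where m = m]
        intro!: sum.cong)
qed

lemma poly_eval_expand_var:
  assumes fin: "finite {\<alpha>. c \<alpha> \<noteq> 0}"
    and fin_vars: "\<And>\<alpha>. c \<alpha> \<noteq> 0 \<Longrightarrow> finite {i. \<alpha> i \<noteq> 0}"
    and deg: "\<And>\<alpha>. c \<alpha> \<noteq> 0 \<Longrightarrow> \<alpha> m \<le> K"
  shows "poly_eval c z = (\<Sum>k\<le>K. poly_eval (coeff_var c m k) z * z m ^ k)"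
proof -
  have "poly_eval c z = (\<Sum>k\<le>K. \<Sum>\<alpha> | c \<alpha> \<noteq> 0 \<and> \<alpha> m = k. c \<alpha> * monomial_eval \<alpha> z)"
    unfolding poly_eval_altdef using fin deg by (subst sum.group[symmetric]) (auto intro!: sum.cong)
  then show ?thesis by (simp add: poly_eval_coeff_var_mult[OF fin fin_vars])
qed

lemma poly_eval_coeff_var_eq_0:
  fixes z :: "nat \<Rightarrow> real"
  assumes fin: "finite {\<alpha>. c \<alpha> \<noteq> 0}"
    and fin_vars: "\<And>\<alpha>. c \<alpha> \<noteq> 0 \<Longrightarrow> finite {i. \<alpha> i \<noteq> 0}"
    and roots: "infinite {x. poly_eval c (z(m := x)) = 0}"
  shows "poly_eval (coeff_var c m k) z = 0"
proof -
  obtain K where K: "\<forall>d \<in> insert k ((\<lambda>\<alpha>. \<alpha> m) ` {\<alpha>. c \<alpha> \<noteq> 0}). d \<le> K"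
    using fin by (meson finite_imageI finite_insert finite_nat_set_iff_bounded_le)
  then have deg: "\<And>\<alpha>. c \<alpha> \<noteq> 0 \<Longrightarrow> \<alpha> m \<le> K" and "k \<le> K" by auto
  have "poly_eval c (z(m := x)) = (\<Sum>j\<le>K. poly_eval (coeff_var c m j) z * x ^ j)" for x
    using poly_eval_expand_var[OF fin fin_vars deg, where z = "z(m := x)"] by simp
  with roots have "infinite {x. (\<Sum>j\<le>K. poly_eval (coeff_var c m j) z * x ^ j) = 0}"
    by simp
  then have "\<forall>j\<le>K. poly_eval (coeff_var c m j) z = 0"
    unfolding polyfun_finite_roots by simp
  with \<open>k \<le> K\<close> show ?thesis by simp
qed

lemma poly_eval_eq_0_if_infinite_roots:
  fixes z :: "nat \<Rightarrow> real"
  assumes fin: "finite {\<alpha>. c \<alpha> \<noteq> 0}"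
    and fin_vars: "\<And>\<alpha>. c \<alpha> \<noteq> 0 \<Longrightarrow> finite {i. \<alpha> i \<noteq> 0}"
    and roots: "infinite {x. poly_eval c (z(m := x)) = 0}"
  shows "poly_eval c z = 0"
proof -
  obtain K where "\<forall>d \<in> (\<lambda>\<alpha>. \<alpha> m) ` {\<alpha>. c \<alpha> \<noteq> 0}. d \<le> K"
    using fin by (meson finite_imageI finite_nat_set_iff_bounded_le)
  then have deg: "\<And>\<alpha>. c \<alpha> \<noteq> 0 \<Longrightarrow> \<alpha> m \<le> K" by auto
  have "poly_eval c z = (\<Sum>k\<le>K. poly_eval (coeff_var c m k) z * z m ^ k)"
    by (rule poly_eval_expand_var[OF fin fin_vars deg])
  also have "\<dots> = 0"
    using poly_eval_coeff_var_eq_0[OF fin fin_vars roots] by simp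
  finally show ?thesis .
qed

lemma poly_eval_eq_0_imp_coeffs_eq_0:
  assumes "finite {\<alpha>. c \<alpha> \<noteq> 0}"
    and "\<And>\<alpha> i. c \<alpha> \<noteq> 0 \<Longrightarrow> \<alpha> i \<noteq> 0 \<Longrightarrow> i < m"
    and "\<And>z. poly_eval c z = 0"
  shows "c \<alpha> = 0"
  using assms
proof (induction m arbitrary: c \<alpha>)
  case 0
  then have "{\<alpha>. c \<alpha> \<noteq> 0} \<subseteq> {\<lambda>_. 0}" by auto
  then have "poly_eval c z = c (\<lambda>_. 0)" for z
    unfolding poly_eval_altdef
    by (subst sum.mono_neutral_left[of "{\<lambda>_. 0}"]) (auto simp: monomial_eval_def)
  with "0.prems"(3) have "c (\<lambda>_. 0) = 0" by simp
  moreover have "\<alpha> = (\<lambda>_. 0)" if "c \<alpha> \<noteq> 0"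
    using "0.prems"(2) that by auto
  ultimately show ?case by auto
next
  case (Suc m)
  have fin_vars: "finite {i. \<beta> i \<noteq> 0}" if "c \<beta> \<noteq> 0" for \<beta>
    by (rule finite_subset[of _ "{..<Suc m}"]) (use Suc.prems(2)[OF that] in auto)
  have "coeff_var c m k \<beta> = 0" for k \<beta>
  proof (rule Suc.IH[where c = "coeff_var c m k"])
    show "finite {\<beta>. coeff_var c m k \<beta> \<noteq> 0}"
      unfolding support_coeff_var using Suc.prems(1) by auto
    show "i < m" if "coeff_var c m k \<beta> \<noteq> 0" "\<beta> i \<noteq> 0" for \<beta> i
    proof -
      from that(1) have "\<beta> m = 0" "c (\<beta>(m := k)) \<noteq> 0"
        by (auto simp: coeff_var_def split: if_splits)
      with that(2) have "i \<noteq> m" "(\<beta>(m := k)) i \<noteq> 0" by auto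
      with Suc.prems(2)[OF \<open>c (\<beta>(m := k)) \<noteq> 0\<close>] show "i < m" by fastforce
    qed
    show "poly_eval (coeff_var c m k) y = 0" for y
    proof -
      have "{x. poly_eval c (y(m := x)) = 0} = UNIV" using Suc.prems(3) by simp
      then show ?thesis
        using poly_eval_coeff_var_eq_0[OF Suc.prems(1) fin_vars] by (simp add: infinite_UNIV_char_0)
    qed
  qed
  from this[of "\<alpha> m" "\<alpha>(m := 0)"] show ?case by simp
qed

lemma is_poly_in_vars_cong:
  assumes "is_poly_in_vars n c" and "\<And>i. i \<le> n \<Longrightarrow> z i = z' i"
  shows "poly_eval c z = poly_eval c z'"
  using assms unfolding is_poly_in_vars_def by (intro poly_eval_cong) (meson not_le)

lemma is_poly_in_vars_eq_0_if_infinite_roots: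
  assumes poly: "is_poly_in_vars n c"
    and roots: "\<And>z. infinite {x. poly_eval c (z(m := x)) = 0}"
  shows "\<forall>\<alpha>. c \<alpha> = 0"
proof -
  have fin: "finite {\<alpha>. c \<alpha> \<noteq> 0}"
    using poly unfolding is_poly_in_vars_def by blast
  have vars: "i < Suc n" if "c \<alpha> \<noteq> 0" "\<alpha> i \<noteq> 0" for \<alpha> i
    using poly that unfolding is_poly_in_vars_def by (meson not_less_eq)
  have fin_vars: "finite {i. \<alpha> i \<noteq> 0}" if "c \<alpha> \<noteq> 0" for \<alpha>
    by (rule finite_subset[of _ "{..<Suc n}"]) (use vars[OF that] in auto)
  have "poly_eval c z = 0" for z
    by (rule poly_eval_eq_0_if_infinite_roots[OF fin fin_vars roots])
  with fin vars show ?thesis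
    by (blast intro: poly_eval_eq_0_imp_coeffs_eq_0)
qed

lemma span_image_finite_sum:
  fixes a :: "'i \<Rightarrow> 'v::real_vector"
  assumes "finite I" "y \<in> span (a ` I)"
  shows "\<exists>\<mu>. y = (\<Sum>i\<in>I. \<mu> i *\<^sub>R a i)"
  using assms(2)
proof (induction rule: span_induct_alt)
  case base
  show ?case by (rule exI[of _ "\<lambda>_. 0"]) simp
next
  case (step r x y)
  then obtain i0 \<mu> where "i0 \<in> I" "x = a i0" and \<mu>: "y = (\<Sum>i\<in>I. \<mu> i *\<^sub>R a i)" by auto
  then have "r *\<^sub>R x + y = (\<Sum>i\<in>I. (\<mu> i + (if i = i0 then r else 0)) *\<^sub>R a i)"
    using assms(1) by (simp add: scaleR_add_left sum.distrib if_distrib[of "\<lambda>t. t *\<^sub>R _"] cong: if_cong)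
  then show ?case by (rule exI[of _ "\<lambda>i. \<mu> i + (if i = i0 then r else 0)"])
qed

lemma dual_vector_exists:
  fixes a :: "'i \<Rightarrow> 'v::euclidean_space"
  assumes fin: "finite I" and j: "j \<in> I"
    and indep: "\<And>\<mu>. (\<Sum>i\<in>I. \<mu> i *\<^sub>R a i) = 0 \<Longrightarrow> \<forall>i\<in>I. \<mu> i = 0"
  shows "\<exists>b. \<forall>i\<in>I. a i \<bullet> b = (if i = j then 1 else 0)"
proof -
  obtain y z where y: "y \<in> span (a ` (I - {j}))"
    and z: "\<And>w. w \<in> span (a ` (I - {j})) \<Longrightarrow> orthogonal z w" and yz: "a j = y + z"
    using orthogonal_subspace_decomp_exists[of "a ` (I - {j})" "a j"] by blast
  have "z \<noteq> 0"
  proof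
    assume "z = 0"
    obtain \<mu> where \<mu>: "y = (\<Sum>i\<in>I - {j}. \<mu> i *\<^sub>R a i)"
      using span_image_finite_sum[OF _ y] fin by blast
    define \<nu> where "\<nu> i = (if i = j then 1 else - \<mu> i)" for i
    have "(\<Sum>i\<in>I. \<nu> i *\<^sub>R a i) = a j - y"
      by (simp add: sum.remove[OF fin j] \<nu>_def \<mu> sum_negf)
    also have "\<dots> = 0" using yz \<open>z = 0\<close> by simp
    finally have "\<nu> j = 0" using indep j by blast
    then show False by (simp add: \<nu>_def)
  qed
  have "a i \<bullet> (z /\<^sub>R (z \<bullet> z)) = (if i = j then 1 else 0)" if "i \<in> I" for i
  proof (cases "i = j")
    case True
    have "y \<bullet> z = 0" using z[OF y] by (simp add: orthogonal_def inner_commute)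
    then show ?thesis using True yz \<open>z \<noteq> 0\<close> by (simp add: inner_add_left)
  next
    case False
    then have "a i \<in> span (a ` (I - {j}))" using that by (intro span_base) auto
    then have "a i \<bullet> z = 0" using z by (simp add: orthogonal_def inner_commute[of z])
    then show ?thesis using False by simp
  qed
  then show ?thesis by blast
qed

lemma linear_functionals_surjective:
  fixes T :: "'i \<Rightarrow> 'v::euclidean_space \<Rightarrow> real"
  assumes fin: "finite I" and lin: "\<forall>i\<in>I. linear (T i)"
    and indep: "\<forall>\<mu>. (\<forall>v. (\<Sum>i\<in>I. \<mu> i * T i v) = 0) \<longrightarrow> (\<forall>i\<in>I. \<mu> i = 0)"
  obtains u where "\<And>t i. i \<in> I \<Longrightarrow> T i (u t) = t i"
proof -
  define a where "a i = adjoint (T i) 1" for i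
  have T_a: "T i v = a i \<bullet> v" if "i \<in> I" for i v
    using adjoint_works[of "T i" v 1] lin that by (simp add: a_def inner_commute)
  have "\<forall>i\<in>I. \<mu> i = 0" if "(\<Sum>i\<in>I. \<mu> i *\<^sub>R a i) = 0" for \<mu>
  proof -
    have "(\<Sum>i\<in>I. \<mu> i * T i v) = (\<Sum>i\<in>I. \<mu> i *\<^sub>R a i) \<bullet> v" for v
      by (simp add: T_a inner_sum_left)
    with that indep show ?thesis by simp
  qed
  then have "\<forall>j\<in>I. \<exists>b. \<forall>i\<in>I. a i \<bullet> b = (if i = j then 1 else 0)"
    using dual_vector_exists[OF fin] by blast
  then obtain b where b: "\<And>i j. i \<in> I \<Longrightarrow> j \<in> I \<Longrightarrow> a i \<bullet> b j = (if i = j then 1 else 0)"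
    by metis
  show thesis
  proof (rule that)
    fix t i assume "i \<in> I"
    then have "T i (\<Sum>j\<in>I. t j *\<^sub>R b j) = (\<Sum>j\<in>I. if j = i then t j else 0)"
      by (auto simp: T_a inner_sum_right b intro!: sum.cong)
    also have "\<dots> = t i" using \<open>i \<in> I\<close> fin by simp
    finally show "T i (\<Sum>j\<in>I. t j *\<^sub>R b j) = t i" .
  qed
qed

lemma infinite_range_polyfun:
  fixes a :: "nat \<Rightarrow> 'a::{comm_ring,real_normed_div_algebra}"
  assumes "k \<in> {1..n}" "a k \<noteq> 0"
  shows "infinite (range (\<lambda>x. \<Sum>i\<le>n. a i * x ^ i))"
proof
  let ?p = "\<lambda>x. \<Sum>i\<le>n. a i * x ^ i"
  assume "finite (range ?p)"
  moreover have "finite (?p -` {y} \<inter> UNIV)" for y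
  proof -
    define b where "b i = a i - (if i = 0 then y else 0)" for i
    have "?p x = y \<longleftrightarrow> (\<Sum>i\<le>n. b i * x ^ i) = 0" for x
      by (simp add: b_def left_diff_distrib sum_subtractf if_distrib[of "\<lambda>t. t * _"] cong: if_cong)
    then have "?p -` {y} \<inter> UNIV = {x. (\<Sum>i\<le>n. b i * x ^ i) = 0}"
      by auto
    moreover have "\<exists>i\<le>n. b i \<noteq> 0"
      using assms by (intro exI[of _ k]) (auto simp: b_def)
    ultimately show ?thesis
      by (simp add: polyfun_finite_roots)
  qed
  ultimately have "finite (?p -` range ?p \<inter> UNIV)"
    by (rule finite_finite_vimage_IntI)
  moreover have "?p -` range ?p \<inter> UNIV = UNIV" by blast
  ultimately show False by (simp add: infinite_UNIV_char_0)
qed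

lemma quadratic_form_infinite_range_on_line:
  assumes "quadratic_form Q" "Q v \<noteq> 0"
  shows "infinite (range (\<lambda>s. Q (s *\<^sub>R v + u)))"
proof -
  obtain B where B: "bilinear B" and Q: "\<And>v. Q v = B v v"
    using assms(1) unfolding quadratic_form_def by blast
  define a :: "nat \<Rightarrow> real"
    where "a i = (if i = 0 then B u u else if i = 1 then B v u + B u v else B v v)" for i
  have "Q (s *\<^sub>R v + u) = (\<Sum>i\<le>2. a i * s ^ i)" for s
    using B by (simp add: Q a_def bilinear_ladd bilinear_radd bilinear_lmul bilinear_rmul
        eval_nat_numeral algebra_simps)
  moreover have "infinite (range (\<lambda>s. \<Sum>i\<le>2. a i * s ^ i))"
    by (rule infinite_range_polyfun[of 2]) (use assms(2) in \<open>auto simp: Q a_def\<close>)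
  ultimately show ?thesis by simp
qed

theorem lemma4p1:
  fixes T :: "nat \<Rightarrow> 'v::euclidean_space \<Rightarrow> real"
    and Q :: "'v \<Rightarrow> real"
    and n :: nat
    and c :: "(nat \<Rightarrow> nat) \<Rightarrow> real"
  assumes lin: "\<forall>i\<in>{1..n}. linear (T i)"
    and indep: "\<forall>a :: nat \<Rightarrow> real. (\<forall>v. (\<Sum>i=1..n. a i * T i v) = 0) \<longrightarrow> (\<forall>i\<in>{1..n}. a i = 0)"
    and quad: "quadratic_form Q"
    and nonzero: "\<exists>v. (\<forall>i\<in>{1..n}. T i v = 0) \<and> Q v \<noteq> 0"
    and poly: "is_poly_in_vars n c"
    and vanish: "\<forall>v. poly_eval c (\<lambda>i. if i = 0 then Q v else T i v) = 0"
  shows "\<forall>\<alpha>. c \<alpha> = 0"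
proof -
  obtain w where w: "\<forall>i\<in>{1..n}. T i w = 0" and Qw: "Q w \<noteq> 0"
    using nonzero by blast
  obtain u where u: "\<And>z i. i \<in> {1..n} \<Longrightarrow> T i (u z) = z i"
    using linear_functionals_surjective[OF finite_atLeastAtMost lin indep] by blast
  have "poly_eval c (z(0 := Q (s *\<^sub>R w + u z))) = 0" for z s
  proof -
    let ?v = "s *\<^sub>R w + u z"
    have "poly_eval c (z(0 := Q ?v)) = poly_eval c (\<lambda>i. if i = 0 then Q ?v else T i ?v)"
      using lin w u by (intro is_poly_in_vars_cong[OF poly]) (auto simp: linear_add linear_scale)
    with vanish show ?thesis by simp
  qed
  then have "range (\<lambda>s. Q (s *\<^sub>R w + u z)) \<subseteq> {x. poly_eval c (z(0 := x)) = 0}" for z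
    by auto
  then have "infinite {x. poly_eval c (z(0 := x)) = 0}" for z
    using quadratic_form_infinite_range_on_line[OF quad Qw] infinite_super by blast
  then show ?thesis
    by (rule is_poly_in_vars_eq_0_if_infinite_roots[OF poly])
qed

end
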